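(* Let $\alpha\in[0,1)\cup(1,2]$ and $c>0$, and let $s_{\alpha,c}$ be the SIGTRON function defined below. For $z\ge0$ and $b>0$ let $F(z;b)=\int_0^z\frac{1}{1+t^{1/b}}\,dt$. Define $L^S_{\alpha,c}:\mathbb R\to\mathbb R$ as follows. (1) If $\alpha\in(1,2]$: $L^S_{\alpha,c}(x)=-c_\alpha F\!\left(1+\frac{x}{c_\alpha};\alpha-1\right)+c_\alpha$ for $x\ge -c_\alpha$, and $L^S_{\alpha,c}(x)=-x$ otherwise. (2) If $\alpha\in[0,1)$: $L^S_{\alpha,c}(x)=c_\alpha F\!\left(1+\frac{x}{c_\alpha};1-\alpha\right)-c_\alpha-x$ for $x\le -c_\alpha$, and $L^S_{\alpha,c}(x)=0$ otherwise. Then $L^S_{\alpha,c}$ is differentiable on $\mathbb R$ and satisfies $\nabla L^S_{\alpha,c}(x)=s_{\alpha,c}(x)-1$ for all $x\in\mathbb R$ (so $L^S_{\alpha,c}$ is, up to an additive constant, the virtual SIGTRON-induced loss function, i.e. the function whose derivative is $s_{\alpha,c}-1$).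
   Context: For $c>0$ and $\alpha\ne1$, $c_\alpha=\frac{1}{\alpha-1}c^{1-\alpha}$ (so $c_\alpha>0$ for $\alpha>1$ and $c_\alpha<0$ for $\alpha<1$). The extended exponential is $\exp_{\alpha,c}(x)=c\left(1-\frac{x}{c_\alpha}\right)^{1/(1-\alpha)}$ with domain $\{x\ge c_\alpha\}$ if $0\le\alpha<1$ and $\{x<c_\alpha\}$ if $\alpha>1$. The extended asymmetric sigmoid is $\sigma_{\alpha,c}(x)=\frac{c}{c+\exp_{\alpha,c}(-x)}$ with domain $\{x\le -c_\alpha\}$ if $0\le\alpha<1$ and $\{x\ge -c_\alpha\}$ if $\alpha>1$ (with $\sigma_{\alpha,c}(-c_\alpha)=0$ for $\alpha>1$). SIGTRON is $s_{\alpha,c}(x)=\sigma_{\alpha,c}(x)$ for $x\in\mathrm{dom}(\sigma_{\alpha,c})$ and $s_{\alpha,c}(x)=\sigma_P(x)$ otherwise, where $\sigma_P(x)=1$ if $x\ge0$ and $0$ otherwise. The virtual SIGTRON-induced loss $L^S_{\alpha,c}$ is defined by the gradient equation $\nabla L^S_{\alpha,c}(x)=s_{\alpha,c}(x)-1$. *)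

theory Defs
  imports "HOL-Analysis.Analysis"
begin

definition c_alpha :: "real \<Rightarrow> real \<Rightarrow> real" where
  "c_alpha \<alpha> c = (1 / (\<alpha> - 1)) * c powr (1 - \<alpha>)"

text \<open>Extended exponential; only meaningful on its domain.\<close>
definition exp_ac :: "real \<Rightarrow> real \<Rightarrow> real \<Rightarrow> real" where
  "exp_ac \<alpha> c x = c * (1 - x / c_alpha \<alpha> c) powr (1 / (1 - \<alpha>))"

definition sigma_dom :: "real \<Rightarrow> real \<Rightarrow> real set" where
  "sigma_dom \<alpha> c = (if \<alpha> < 1 then {x. x \<le> - c_alpha \<alpha> c} else {x. x \<ge> - c_alpha \<alpha> c})"

text \<open>Extended asymmetric sigmoid, with the convention value 0 at the boundary point for alpha > 1.\<close>
definition sigma_ac :: "real \<Rightarrow> real \<Rightarrow> real \<Rightarrow> real" where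
  "sigma_ac \<alpha> c x = (if \<alpha> > 1 \<and> x = - c_alpha \<alpha> c then 0 else c / (c + exp_ac \<alpha> c (- x)))"

definition sigma_P :: "real \<Rightarrow> real" where
  "sigma_P x = (if x \<ge> 0 then 1 else 0)"

definition sigtron :: "real \<Rightarrow> real \<Rightarrow> real \<Rightarrow> real" where
  "sigtron \<alpha> c x = (if x \<in> sigma_dom \<alpha> c then sigma_ac \<alpha> c x else sigma_P x)"

definition F_int :: "real \<Rightarrow> real \<Rightarrow> real" where
  "F_int z b = integral {0..z} (\<lambda>t. 1 / (1 + t powr (1 / b)))"

definition L_S :: "real \<Rightarrow> real \<Rightarrow> real \<Rightarrow> real" where
  "L_S \<alpha> c x =
    (let ca = c_alpha \<alpha> c in
     if \<alpha> > 1 then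
       (if x \<ge> - ca then - ca * F_int (1 + x / ca) (\<alpha> - 1) + ca else - x)
     else
       (if x \<le> - ca then ca * F_int (1 + x / ca) (1 - \<alpha>) - ca - x else 0))"

end

theory Submission
  imports Defs
begin

text \<open>Extend the integrand \<open>1 / (1 + t powr (1/b))\<close> of \<open>F(\<cdot>; b)\<close> by the value \<open>1\<close> on
  \<open>t < 0\<close>. The extension is continuous, and its antiderivative \<open>F_ext\<close> agrees with \<open>F\<close> on
  \<open>z \<ge> 0\<close> and is the identity on \<open>z < 0\<close>. Both branches of \<open>L_S\<close> are then one affine
  expression in \<open>F_ext (1 + x / c\<^sub>\<alpha>)\<close>, so \<open>L_S\<close> is differentiable everywhere. Since
  \<open>exp\<^sub>\<alpha>\<^sub>,\<^sub>c(-x) = c z powr (1/(1 - \<alpha>))\<close> with \<open>z = 1 + x / c\<^sub>\<alpha>\<close>, the integrand at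
  \<open>z \<ge> 0\<close> equals \<open>\<sigma>\<^sub>\<alpha>\<^sub>,\<^sub>c(x)\<close> for \<open>\<alpha> < 1\<close> and \<open>1 - \<sigma>\<^sub>\<alpha>\<^sub>,\<^sub>c(x)\<close> for \<open>\<alpha> > 1\<close>,
  while at \<open>z < 0\<close> its value \<open>1\<close> matches the Heaviside branch of the SIGTRON.\<close>

definition F_integrand :: "real \<Rightarrow> real \<Rightarrow> real" where
  "F_integrand b t = 1 / (1 + max t 0 powr (1 / b))"

definition F_ext :: "real \<Rightarrow> real \<Rightarrow> real" where
  "F_ext z b = (if z \<ge> 0 then F_int z b else z)"

lemma continuous_on_F_integrand:
  assumes "b > 0"
  shows "continuous_on UNIV (F_integrand b)"
proof -
  have "isCont (\<lambda>t::real. max t 0 powr (1 / b)) t" for t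
    unfolding isCont_def
    by (rule tendsto_powr') (use assms in \<open>auto intro!: tendsto_eq_intros\<close>)
  then have "continuous_on UNIV (\<lambda>t::real. max t 0 powr (1 / b))"
    by (simp add: continuous_at_imp_continuous_on)
  moreover have "1 + max t 0 powr (1 / b) \<noteq> 0" for t :: real
    using powr_ge_zero[of "max t 0" "1 / b"] by linarith
  ultimately show ?thesis
    unfolding F_integrand_def by (auto intro!: continuous_intros)
qed

lemma F_ext_eq_integral_diff:
  assumes "b > 0" "a < 0" "a \<le> z"
  shows "F_ext z b = integral {a..z} (F_integrand b) - integral {a..0} (F_integrand b)"
proof -
  have integrable: "F_integrand b integrable_on {u..v}" for u v
    using continuous_on_F_integrand[OF assms(1)]
    by (intro integrable_continuous_interval) (auto intro: continuous_on_subset)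
  show ?thesis
  proof (cases "z \<ge> 0")
    case True
    have "integral {a..z} (F_integrand b) = integral {a..0} (F_integrand b) + integral {0..z} (F_integrand b)"
      using Henstock_Kurzweil_Integration.integral_combine[OF _ _ integrable, of a 0 z] True assms by simp
    moreover have "integral {0..z} (F_integrand b) = F_int z b"
      unfolding F_int_def by (intro integral_cong) (auto simp: F_integrand_def)
    ultimately show ?thesis
      using True by (simp add: F_ext_def)
  next
    case False
    have "integral {a..0} (F_integrand b) = integral {a..z} (F_integrand b) + integral {z..0} (F_integrand b)"
      using Henstock_Kurzweil_Integration.integral_combine[OF _ _ integrable, of a z 0] False assms by simp
    moreover have "integral {z..0} (F_integrand b) = integral {z..0} (\<lambda>_. 1::real)"
      by (intro integral_cong) (auto simp: F_integrand_def)
    ultimately show ?thesis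
      using False by (simp add: F_ext_def)
  qed
qed

lemma F_ext_has_real_derivative:
  assumes "b > 0"
  shows "((\<lambda>z. F_ext z b) has_real_derivative F_integrand b z) (at z)"
proof -
  define a where "a = min z 0 - 1"
  define a' where "a' = max z 0 + 1"
  have "((\<lambda>w. integral {a..w} (F_integrand b)) has_vector_derivative F_integrand b z) (at z within {a..a'})"
    using continuous_on_F_integrand[OF assms]
    by (intro integral_has_vector_derivative) (auto intro: continuous_on_subset simp: a_def a'_def)
  moreover have "at z within {a..a'} = at z"
    by (rule at_within_Icc_at) (auto simp: a_def a'_def)
  ultimately have "((\<lambda>w. integral {a..w} (F_integrand b) - integral {a..0} (F_integrand b))
      has_real_derivative F_integrand b z) (at z)"
    by (auto simp: has_real_derivative_iff_has_vector_derivative intro!: derivative_eq_intros)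
  then show ?thesis
    by (rule has_field_derivative_transform_within_open[where S = "{a<..}"])
       (use F_ext_eq_integral_diff[OF assms, of a] in \<open>auto simp: a_def\<close>)
qed

lemma F_ext_affine_has_real_derivative:
  assumes "b > 0" "k \<noteq> 0"
  shows "((\<lambda>x. F_ext (1 + x / k) b) has_real_derivative F_integrand b (1 + x / k) / k) (at x)"
proof -
  have "((\<lambda>x. F_ext (1 + x / k) b) has_real_derivative F_integrand b (1 + x / k) * (1 / k)) (at x)"
    by (rule DERIV_chain2[OF F_ext_has_real_derivative[OF assms(1)]])
       (use assms(2) in \<open>auto intro!: derivative_eq_intros\<close>)
  then show ?thesis
    by simp
qed

lemma c_alpha_pos: "1 < \<alpha> \<Longrightarrow> 0 < c \<Longrightarrow> 0 < c_alpha \<alpha> c"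
  by (simp add: c_alpha_def)

lemma c_alpha_neg: "\<alpha> < 1 \<Longrightarrow> 0 < c \<Longrightarrow> c_alpha \<alpha> c < 0"
  by (simp add: c_alpha_def divide_pos_neg)

lemma L_S_gt_1:
  assumes "1 < \<alpha>" "0 < c"
  shows "L_S \<alpha> c = (\<lambda>x. - c_alpha \<alpha> c * F_ext (1 + x / c_alpha \<alpha> c) (\<alpha> - 1) + c_alpha \<alpha> c)"
proof
  fix x
  define k where "k = c_alpha \<alpha> c"
  have k: "0 < k"
    using c_alpha_pos[OF assms] by (simp add: k_def)
  have "x \<ge> - k \<longleftrightarrow> 1 + x / k \<ge> 0"
    using k by (simp add: field_simps) linarith
  moreover have "- k * (1 + x / k) + k = - x"
    using k by (simp add: field_simps)
  ultimately show "L_S \<alpha> c x = - k * F_ext (1 + x / k) (\<alpha> - 1) + k"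
    using assms(1) by (simp add: L_S_def F_ext_def Let_def flip: k_def)
qed

lemma L_S_lt_1:
  assumes "\<alpha> < 1" "0 < c"
  shows "L_S \<alpha> c = (\<lambda>x. c_alpha \<alpha> c * F_ext (1 + x / c_alpha \<alpha> c) (1 - \<alpha>) - c_alpha \<alpha> c - x)"
proof
  fix x
  define k where "k = c_alpha \<alpha> c"
  have k: "k < 0"
    using c_alpha_neg[OF assms] by (simp add: k_def)
  have "x \<le> - k \<longleftrightarrow> 1 + x / k \<ge> 0"
    using k by (simp add: field_simps) linarith
  moreover have "k * (1 + x / k) - k - x = 0"
    using k by (simp add: field_simps)
  ultimately show "L_S \<alpha> c x = k * F_ext (1 + x / k) (1 - \<alpha>) - k - x"
    using assms(1) by (simp add: L_S_def F_ext_def Let_def flip: k_def)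
qed

lemma sigtron_gt_1:
  assumes "1 < \<alpha>" "0 < c"
  shows "sigtron \<alpha> c x = 1 - F_integrand (\<alpha> - 1) (1 + x / c_alpha \<alpha> c)"
proof -
  define z where "z = 1 + x / c_alpha \<alpha> c"
  have ca: "0 < c_alpha \<alpha> c"
    using c_alpha_pos[OF assms] .
  consider "x \<le> - c_alpha \<alpha> c" | "x > - c_alpha \<alpha> c"
    by linarith
  then show ?thesis
  proof cases
    case 1
    then have "z \<le> 0"
      using ca by (simp add: z_def field_simps)
    then show ?thesis
      using 1 ca assms by (auto simp: z_def[symmetric] F_integrand_def sigtron_def sigma_dom_def
          sigma_ac_def sigma_P_def)
  next
    case 2
    define v where "v = z powr (1 / (\<alpha> - 1))"
    have "z > 0"
      using 2 ca by (simp add: z_def field_simps)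
    then have v: "v > 0" "F_integrand (\<alpha> - 1) z = 1 / (1 + v)"
      by (simp_all add: v_def F_integrand_def)
    have "1 - - x / c_alpha \<alpha> c = z" "1 / (1 - \<alpha>) = - (1 / (\<alpha> - 1))"
      using assms by (simp_all add: z_def field_simps)
    then have "exp_ac \<alpha> c (- x) = c / v"
      unfolding exp_ac_def by (simp add: v_def powr_minus divide_inverse)
    then have "sigtron \<alpha> c x = c / (c + c / v)"
      using 2 assms by (simp add: sigtron_def sigma_dom_def sigma_ac_def)
    also have "\<dots> = c / (c * (1 + v) / v)"
      using v by (simp add: field_simps)
    also have "\<dots> = v / (1 + v)"
      using v assms(2) by simp
    also have "\<dots> = 1 - 1 / (1 + v)"
      using v by (simp add: field_simps)
    finally show ?thesis
      using v by (simp add: z_def)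
  qed
qed

lemma sigtron_lt_1:
  assumes "\<alpha> < 1" "0 < c"
  shows "sigtron \<alpha> c x = F_integrand (1 - \<alpha>) (1 + x / c_alpha \<alpha> c)"
proof -
  define z where "z = 1 + x / c_alpha \<alpha> c"
  have ca: "c_alpha \<alpha> c < 0"
    using c_alpha_neg[OF assms] .
  consider "x > - c_alpha \<alpha> c" | "x \<le> - c_alpha \<alpha> c"
    by linarith
  then show ?thesis
  proof cases
    case 1
    then have "z < 0"
      using ca by (simp add: z_def field_simps)
    then show ?thesis
      using 1 ca assms by (auto simp: z_def[symmetric] F_integrand_def sigtron_def sigma_dom_def sigma_P_def)
  next
    case 2
    define v where "v = z powr (1 / (1 - \<alpha>))"
    have "z \<ge> 0"
      using 2 ca by (simp add: z_def field_simps)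
    then have v: "v \<ge> 0" "F_integrand (1 - \<alpha>) z = 1 / (1 + v)"
      by (simp_all add: v_def F_integrand_def)
    have "1 - - x / c_alpha \<alpha> c = z"
      by (simp add: z_def)
    then have "exp_ac \<alpha> c (- x) = c * v"
      unfolding exp_ac_def by (simp add: v_def)
    then have "sigtron \<alpha> c x = c / (c + c * v)"
      using 2 assms by (simp add: sigtron_def sigma_dom_def sigma_ac_def)
    also have "\<dots> = c / (c * (1 + v))"
      by (simp add: algebra_simps)
    also have "\<dots> = 1 / (1 + v)"
      using v assms(2) by simp
    finally show ?thesis
      using v by (simp add: z_def)
  qed
qed

lemma L_S_has_real_derivative_gt_1:
  assumes "1 < \<alpha>" "0 < c"
  shows "(L_S \<alpha> c has_real_derivative sigtron \<alpha> c x - 1) (at x)"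
proof -
  define k where "k = c_alpha \<alpha> c"
  have k: "0 < k"
    using c_alpha_pos[OF assms] by (simp add: k_def)
  have "((\<lambda>x. - k * F_ext (1 + x / k) (\<alpha> - 1) + k)
      has_real_derivative - k * (F_integrand (\<alpha> - 1) (1 + x / k) / k) + 0) (at x)"
    using assms k by (intro DERIV_add DERIV_cmult DERIV_const F_ext_affine_has_real_derivative) auto
  then show ?thesis
    using k by (simp add: L_S_gt_1[OF assms] sigtron_gt_1[OF assms] flip: k_def)
qed

lemma L_S_has_real_derivative_lt_1:
  assumes "\<alpha> < 1" "0 < c"
  shows "(L_S \<alpha> c has_real_derivative sigtron \<alpha> c x - 1) (at x)"
proof -
  define k where "k = c_alpha \<alpha> c"
  have k: "k < 0"
    using c_alpha_neg[OF assms] by (simp add: k_def)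
  have "((\<lambda>x. k * F_ext (1 + x / k) (1 - \<alpha>) - k - x)
      has_real_derivative k * (F_integrand (1 - \<alpha>) (1 + x / k) / k) - 0 - 1) (at x)"
    using assms k by (intro DERIV_diff DERIV_cmult DERIV_const DERIV_ident F_ext_affine_has_real_derivative) auto
  then show ?thesis
    using k by (simp add: L_S_lt_1[OF assms] sigtron_lt_1[OF assms] flip: k_def)
qed

theorem lemma1:
  fixes \<alpha> c :: real
  assumes "(0 \<le> \<alpha> \<and> \<alpha> < 1) \<or> (1 < \<alpha> \<and> \<alpha> \<le> 2)"
    and "c > 0"
  shows "\<forall>x::real. L_S \<alpha> c differentiable (at x) \<and>
           (L_S \<alpha> c has_real_derivative (sigtron \<alpha> c x - 1)) (at x)"
proof
  fix x
  have "(L_S \<alpha> c has_real_derivative (sigtron \<alpha> c x - 1)) (at x)"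
    using assms L_S_has_real_derivative_gt_1 L_S_has_real_derivative_lt_1 by blast
  then show "L_S \<alpha> c differentiable (at x) \<and> (L_S \<alpha> c has_real_derivative (sigtron \<alpha> c x - 1)) (at x)"
    using real_differentiable_def by blast
qed

end
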